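(* Let $H,K$ be complex Hilbert spaces with $\dim H=n$, $\dim K=m$, and let $r$ be an integer with $1\le r\le n\le m$. Then there is an $r$-tuple $(v_1,\dots,v_r)$ of operators $v_k\in\mathcal B(H,K)$ with $v_1^*v_1+\cdots+v_r^*v_r=\mathbf 1_H$ such that the family of $r^2$ operators $\{v_i^*v_j:1\le i,j\le r\}$ is linearly independent in $\mathcal B(H)$. *)

theory Defs
  imports "HOL-Analysis.Analysis"
begin

text \<open>Operators between finite-dimensional complex Hilbert spaces are represented by
  their matrices w.r.t. orthonormal bases; the Hilbert-space adjoint is the conjugate transpose.\<close>

definition adj :: "complex^'n^'m \<Rightarrow> complex^'m^'n" where
  "adj A = (\<chi> i j. cnj (A $ j $ i))"

definition cscale :: "complex \<Rightarrow> complex^'n^'m \<Rightarrow> complex^'n^'m" where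
  "cscale c A = (\<chi> i j. c * (A $ i $ j))"

definition lin_indep_family :: "'i set \<Rightarrow> ('i \<Rightarrow> complex^'n^'m) \<Rightarrow> bool" where
  "lin_indep_family I f \<longleftrightarrow>
     (\<forall>c. (\<Sum>p\<in>I. cscale (c p) (f p)) = 0 \<longrightarrow> (\<forall>p\<in>I. c p = 0))"

end

theory Submission
  imports Defs
begin

text \<open>Choose orthonormal bases \<open>e\<^sub>p\<close> of \<open>H\<close>, \<open>f\<^sub>a\<close> of \<open>K\<close>, distinct indices \<open>p\<^sub>1,\<dots>,p\<^sub>r\<close> (as \<open>r \<le> n\<close>) and an
  injection \<open>g\<close> of the basis indices of \<open>H\<close> into those of \<open>K\<close> (as \<open>n \<le> m\<close>). Let \<open>v\<^sub>k\<close> send \<open>e\<^sub>p\<^sub>k\<close> to the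
  common unit vector \<open>f\<^sub>g\<^sub>(\<^sub>p\<^sub>1\<^sub>)\<close>, and let \<open>v\<^sub>1\<close> in addition act as \<open>g\<close> on the basis vectors
  outside \<open>p\<^sub>1,\<dots>,p\<^sub>r\<close>; all other basis vectors are killed. Every \<open>v\<^sub>k\<^sup>*v\<^sub>k\<close> is a coordinate
  projection and these projections partition the basis of \<open>H\<close>, so they sum to \<open>1\<close>.
  The \<open>(p\<^sub>i,p\<^sub>j)\<close> entry of \<open>v\<^sub>k\<^sup>*v\<^sub>l\<close> is \<open>1\<close> if \<open>(k,l) = (i,j)\<close> and \<open>0\<close> otherwise, so reading off
  these entries from a vanishing linear combination shows that all coefficients vanish.\<close>

definition pmap_matrix :: "('n \<Rightarrow> 'm option) \<Rightarrow> complex^'n^'m" where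
  "pmap_matrix c = (\<chi> a p. if c p = Some a then 1 else 0)"

lemma adj_pmap_matrix_mult_pmap_matrix:
  fixes c d :: "'n::finite \<Rightarrow> 'm::finite option"
  shows "(adj (pmap_matrix c) ** pmap_matrix d) $ p $ q
       = (if c p = d q \<and> c p \<noteq> None then 1 else 0)"
proof -
  have "(adj (pmap_matrix c) ** pmap_matrix d) $ p $ q
      = (\<Sum>a\<in>UNIV. if c p = Some a then if d q = Some a then 1 else 0 else 0)"
    by (auto simp: matrix_matrix_mult_def adj_def pmap_matrix_def intro!: sum.cong)
  also have "\<dots> = (if c p = d q \<and> c p \<noteq> None then 1 else 0)"
    by (cases "c p") auto
  finally show ?thesis .
qed

lemma sum_adj_pmap_matrix_mult_eq_mat_1:
  fixes c :: "'k \<Rightarrow> 'n::finite \<Rightarrow> 'm::finite option"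
  assumes "finite K"
    and unique: "\<And>p. \<exists>!k. k \<in> K \<and> c k p \<noteq> None"
    and inj: "\<And>k. k \<in> K \<Longrightarrow> inj_on (c k) {p. c k p \<noteq> None}"
  shows "(\<Sum>k\<in>K. adj (pmap_matrix (c k)) ** pmap_matrix (c k)) = mat 1"
  unfolding vec_eq_iff
proof (intro allI)
  fix p q
  obtain k0 where k0: "k0 \<in> K" "c k0 p \<noteq> None" and only: "\<And>k. k \<in> K \<Longrightarrow> c k p \<noteq> None \<Longrightarrow> k = k0"
    using unique[of p] by blast
  have "(\<Sum>k\<in>K. adj (pmap_matrix (c k)) ** pmap_matrix (c k)) $ p $ q
      = (\<Sum>k\<in>K. if c k p = c k q \<and> c k p \<noteq> None then 1 else 0)"
    by (simp add: sum_component adj_pmap_matrix_mult_pmap_matrix)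
  also have "\<dots> = (\<Sum>k\<in>K. if k = k0 \<and> p = q then 1 else 0)"
  proof (intro sum.cong refl)
    fix k
    assume k: "k \<in> K"
    have "c k p = c k q \<and> c k p \<noteq> None \<longleftrightarrow> k = k0 \<and> p = q"
    proof (cases "k = k0")
      case True
      with k0 inj[OF k] show ?thesis by (auto simp: inj_on_def)
    next
      case False
      then have "c k p = None" using only[OF k] by blast
      with False show ?thesis by simp
    qed
    then show "(if c k p = c k q \<and> c k p \<noteq> None then 1 else 0 :: complex)
        = (if k = k0 \<and> p = q then 1 else 0)" by simp
  qed
  also have "\<dots> = mat 1 $ p $ q"
    using \<open>finite K\<close> k0 by (simp add: mat_def)
  finally show "(\<Sum>k\<in>K. adj (pmap_matrix (c k)) ** pmap_matrix (c k)) $ p $ q = mat 1 $ p $ q" .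
qed

lemma lin_indep_family_if_dual_entries:
  fixes f :: "'i \<Rightarrow> complex^'n^'m"
  assumes "finite I"
    and dual: "\<And>p q. p \<in> I \<Longrightarrow> q \<in> I \<Longrightarrow> f q $ a p $ b p = (if q = p then 1 else 0)"
  shows "lin_indep_family I f"
  unfolding lin_indep_family_def
proof (intro allI impI ballI)
  fix c p
  assume zero: "(\<Sum>q\<in>I. cscale (c q) (f q)) = 0" and p: "p \<in> I"
  have "0 = (\<Sum>q\<in>I. cscale (c q) (f q)) $ a p $ b p"
    by (simp add: zero)
  also have "\<dots> = (\<Sum>q\<in>I. c q * f q $ a p $ b p)"
    by (simp add: sum_component cscale_def)
  also have "\<dots> = (\<Sum>q\<in>I. if q = p then c p else 0)"
    using p dual by (intro sum.cong) auto
  also have "\<dots> = c p"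
    using \<open>finite I\<close> p by simp
  finally show "c p = 0" by simp
qed

text \<open>The basis-index map of \<open>v\<^sub>k\<close> above, with \<open>p\<^sub>i = idx i\<close> and \<open>k0\<close> in the role of \<open>1\<close>.\<close>

definition funnel_pmap :: "('k \<Rightarrow> 'n) \<Rightarrow> 'k set \<Rightarrow> 'k \<Rightarrow> ('n \<Rightarrow> 'm) \<Rightarrow> 'k \<Rightarrow> 'n \<Rightarrow> 'm option" where
  "funnel_pmap idx K k0 g k p =
     (if p = idx k then Some (g (idx k0))
      else if k = k0 \<and> p \<notin> idx ` K then Some (g p) else None)"

context
  fixes idx :: "'k \<Rightarrow> 'n::finite" and K :: "'k set" and k0 :: 'k and g :: "'n \<Rightarrow> 'm::finite"
  assumes idx: "inj_on idx K" and k0: "k0 \<in> K" and g: "inj g"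
begin

lemma funnel_pmap_idx:
  assumes "i \<in> K" and "k \<in> K"
  shows "funnel_pmap idx K k0 g k (idx i) = (if k = i then Some (g (idx k0)) else None)"
  using assms idx unfolding funnel_pmap_def by (auto dest: inj_onD)

lemma ex1_funnel_pmap_defined: "\<exists>!k. k \<in> K \<and> funnel_pmap idx K k0 g k p \<noteq> None"
proof (cases "p \<in> idx ` K")
  case True
  then obtain i where "i \<in> K" "p = idx i" by blast
  then show ?thesis
    using funnel_pmap_idx by (intro ex1I[of _ i]) (auto split: if_splits)
next
  case False
  then show ?thesis
    using k0 by (auto simp: funnel_pmap_def)
qed

lemma inj_on_funnel_pmap:
  "inj_on (funnel_pmap idx K k0 g k) {p. funnel_pmap idx K k0 g k p \<noteq> None}"
  using g k0 by (auto simp: funnel_pmap_def inj_on_def dest: injD split: if_splits)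

lemma sum_adj_funnel_matrix_mult_eq_mat_1:
  assumes "finite K"
  shows "(\<Sum>k\<in>K. adj (pmap_matrix (funnel_pmap idx K k0 g k))
                  ** pmap_matrix (funnel_pmap idx K k0 g k)) = mat 1"
  using assms ex1_funnel_pmap_defined inj_on_funnel_pmap
  by (rule sum_adj_pmap_matrix_mult_eq_mat_1)

lemma lin_indep_family_adj_funnel_matrix_mult:
  assumes "finite K"
  shows "lin_indep_family (K \<times> K)
     (\<lambda>(i, j). adj (pmap_matrix (funnel_pmap idx K k0 g i)) ** pmap_matrix (funnel_pmap idx K k0 g j))"
proof (rule lin_indep_family_if_dual_entries[where a = "idx \<circ> fst" and b = "idx \<circ> snd"])
  fix p q
  assume "p \<in> K \<times> K" and "q \<in> K \<times> K"
  then obtain i j k l where "p = (i, j)" "q = (k, l)" "i \<in> K" "j \<in> K" "k \<in> K" "l \<in> K"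
    by auto
  then show "(case q of (i, j) \<Rightarrow>
        adj (pmap_matrix (funnel_pmap idx K k0 g i)) ** pmap_matrix (funnel_pmap idx K k0 g j))
      $ (idx \<circ> fst) p $ (idx \<circ> snd) p = (if q = p then 1 else 0)"
    by (simp add: adj_pmap_matrix_mult_pmap_matrix funnel_pmap_idx)
qed (use assms in simp)

end

theorem lemma5p2:
  fixes r :: nat
  assumes "1 \<le> r" and "r \<le> CARD('n::finite)" and "CARD('n) \<le> CARD('m::finite)"
  shows "\<exists>v :: nat \<Rightarrow> complex^'n^'m.
           (\<Sum>k=1..r. adj (v k) ** v k) = mat 1 \<and>
           lin_indep_family ({1..r} \<times> {1..r}) (\<lambda>(i, j). adj (v i) ** v j)"
proof -
  obtain idx :: "nat \<Rightarrow> 'n" where idx: "inj_on idx {1..r}"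
    using card_le_inj[of "{1..r}" "UNIV :: 'n set"] assms by auto
  obtain g :: "'n \<Rightarrow> 'm" where g: "inj g"
    using card_le_inj[of "UNIV :: 'n set" "UNIV :: 'm set"] assms by auto
  define v where "v k = pmap_matrix (funnel_pmap idx {1..r} 1 g k)" for k
  have "(\<Sum>k=1..r. adj (v k) ** v k) = mat 1"
    unfolding v_def using idx g assms(1) by (intro sum_adj_funnel_matrix_mult_eq_mat_1) auto
  moreover have "lin_indep_family ({1..r} \<times> {1..r}) (\<lambda>(i, j). adj (v i) ** v j)"
    unfolding v_def using idx g assms(1) by (intro lin_indep_family_adj_funnel_matrix_mult) auto
  ultimately show ?thesis by blast
qed

end
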